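(* Let $\mathfrak{L}_3(\alpha_1,\beta_1,\gamma_1,\alpha_2,\beta_2,\gamma_2):=P(Z(\alpha_1,\beta_1,\gamma_1),Y(\alpha_2,\beta_2,\gamma_2))$ for $(\alpha_i,\beta_i,\gamma_i)\in(-\pi,\pi]\times(0,\pi)\times(-\pi,\pi]$, $i=1,2$. Then no point with $\alpha_2=\gamma_2=0$ is a critical point of $\mathfrak{L}_3$, i.e. the gradient of $\mathfrak{L}_3$ with respect to all variables is nonzero at every such point.
   Context: Basis of $\mathbb C^3$: $|1\rangle,|2\rangle,|3\rangle$ (standard basis). Spin-1 matrices in this basis: $J_y=\frac{1}{\sqrt2}\begin{pmatrix}0&-i&0\\ i&0&-i\\ 0&i&0\end{pmatrix}$, $J_z=\mathrm{diag}(1,0,-1)$. Define $Z(\alpha,\beta,\gamma)=e^{-i\alpha J_z}e^{-i\beta J_y}e^{-i\gamma J_z}$ and $Y(\alpha,\beta,\gamma)=e^{-i\alpha J_y}e^{-i\beta J_z}e^{-i\gamma J_y}$. Let $\mathcal R=\{Z(\alpha,\beta,\gamma):\alpha,\beta,\gamma\in\mathbb R\}\subset U(3)$. For $j\in\{1,2\}$ let $P_j=|j\rangle\langle j|$ and $\mathcal M_j(\rho)=P_j\rho P_j+(\mathbb I-P_j)\rho(\mathbb I-P_j)$. Define $P(U_1,U_2)=\langle 2|U_2\,\mathcal M_1(U_1|1\rangle\langle 1|U_1^\dagger)\,U_2^\dagger|2\rangle$ for $U_1,U_2\in\mathcal R$. *)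

theory Defs
  imports "HOL-Analysis.Analysis" "Jordan_Normal_Form.Matrix"
begin

text \<open>Basis vectors |1>,|2>,|3> of C^3 correspond to indices 0,1,2 of 3x3 matrices.\<close>

definition Jy :: "complex mat" where
  "Jy = mat_of_rows_list 3
     [[0, - \<i> / sqrt 2, 0],
      [\<i> / sqrt 2, 0, - \<i> / sqrt 2],
      [0, \<i> / sqrt 2, 0]]"

definition Jz :: "complex mat" where
  "Jz = mat_of_rows_list 3 [[1, 0, 0], [0, 0, 0], [0, 0, -1]]"

definition mexp :: "complex mat \<Rightarrow> complex mat" where
  "mexp A = mat (dim_row A) (dim_col A)
     (\<lambda>(i, j). (\<Sum>n. (A ^\<^sub>m n) $$ (i, j) / of_nat (fact n)))"

definition adj :: "complex mat \<Rightarrow> complex mat" where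
  "adj A = mat (dim_col A) (dim_row A) (\<lambda>(i, j). cnj (A $$ (j, i)))"

definition Zrot :: "real \<Rightarrow> real \<Rightarrow> real \<Rightarrow> complex mat" where
  "Zrot a b c = mexp ((- \<i> * of_real a) \<cdot>\<^sub>m Jz) * mexp ((- \<i> * of_real b) \<cdot>\<^sub>m Jy)
                * mexp ((- \<i> * of_real c) \<cdot>\<^sub>m Jz)"

definition Yrot :: "real \<Rightarrow> real \<Rightarrow> real \<Rightarrow> complex mat" where
  "Yrot a b c = mexp ((- \<i> * of_real a) \<cdot>\<^sub>m Jy) * mexp ((- \<i> * of_real b) \<cdot>\<^sub>m Jz)
                * mexp ((- \<i> * of_real c) \<cdot>\<^sub>m Jy)"

text \<open>proj k = |k+1><k+1| (0-based index k).\<close>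
definition proj :: "nat \<Rightarrow> complex mat" where
  "proj k = mat 3 3 (\<lambda>(a, b). if a = k \<and> b = k then 1 else 0)"

text \<open>The measurement channel M_j, with 0-based index k = j - 1.\<close>
definition meas :: "nat \<Rightarrow> complex mat \<Rightarrow> complex mat" where
  "meas k \<rho> = proj k * \<rho> * proj k + (1\<^sub>m 3 - proj k) * \<rho> * (1\<^sub>m 3 - proj k)"

definition Pfun :: "complex mat \<Rightarrow> complex mat \<Rightarrow> complex" where
  "Pfun U1 U2 = (U2 * meas 0 (U1 * proj 0 * adj U1) * adj U2) $$ (1, 1)"

text \<open>L_3 as a function of x = (alpha1, beta1, gamma1, alpha2, beta2, gamma2),
  stored in components x$1,...,x$6 of a vector in R^6.\<close>
definition L3 :: "real^6 \<Rightarrow> complex" where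
  "L3 x = Pfun (Zrot (x$1) (x$2) (x$3)) (Yrot (x$4) (x$5) (x$6))"

end

theory Submission
  imports Defs
begin

text \<open>Both \<open>Jy\<close> and \<open>Jz\<close> have eigenvalues \<open>1, -1, 0\<close>, so the exponential series is summed
  through their spectral projections and every rotation entry is an explicit trigonometric
  polynomial. After the measurement \<open>M_1\<close> the quantity \<open>P\<close> is the sum of the squared moduli
  of two branch amplitudes, and when \<open>\<alpha>\<^sub>2 = 0\<close> or \<open>\<gamma>\<^sub>2 = 0\<close> this gives \<open>L\<^sub>3\<close> in closed form.
  Differentiating these closed forms along the axes of \<open>\<beta>\<^sub>1\<close>, \<open>\<alpha>\<^sub>2\<close> and \<open>\<gamma>\<^sub>2\<close> shows that these
  three partial derivatives cannot vanish simultaneously: that would force \<open>cos \<beta>\<^sub>1 = 0\<close>,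
  \<open>cos \<alpha>\<^sub>1 = 0\<close> and \<open>cos (\<alpha>\<^sub>1 + \<beta>\<^sub>2) = 0\<close>, impossible for \<open>0 < \<beta>\<^sub>2 < \<pi>\<close>.\<close>

lemma mexp_spectral:
  assumes "M \<in> carrier_mat m n" "A \<in> carrier_mat m n" "B \<in> carrier_mat m n" "C \<in> carrier_mat m n"
    and powers: "\<And>k. M ^\<^sub>m k = z ^ k \<cdot>\<^sub>m A + (- z) ^ k \<cdot>\<^sub>m B + 0 ^ k \<cdot>\<^sub>m C"
  shows "mexp M = exp z \<cdot>\<^sub>m A + exp (- z) \<cdot>\<^sub>m B + C"
proof (rule eq_matI)
  fix i j assume "i < dim_row (exp z \<cdot>\<^sub>m A + exp (- z) \<cdot>\<^sub>m B + C)"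
    "j < dim_col (exp z \<cdot>\<^sub>m A + exp (- z) \<cdot>\<^sub>m B + C)"
  then have ij: "i < m" "j < n" using assms by auto
  have exp_sums: "(\<lambda>k. w ^ k / of_nat (fact k)) sums exp w" for w :: complex
    using exp_converges[of w] by (simp add: scaleR_conv_of_real divide_inverse mult.commute)
  have "(\<lambda>k. (M ^\<^sub>m k) $$ (i, j) / of_nat (fact k)) =
      (\<lambda>k. A $$ (i, j) * (z ^ k / of_nat (fact k)) + B $$ (i, j) * ((- z) ^ k / of_nat (fact k))
         + C $$ (i, j) * (0 ^ k / of_nat (fact k)))"
    using assms ij by (simp add: powers algebra_simps add_divide_distrib)
  also have "\<dots> sums (A $$ (i, j) * exp z + B $$ (i, j) * exp (- z) + C $$ (i, j) * exp 0)"
    by (intro sums_add sums_mult exp_sums)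
  finally show "mexp M $$ (i, j) = (exp z \<cdot>\<^sub>m A + exp (- z) \<cdot>\<^sub>m B + C) $$ (i, j)"
    using assms ij by (simp add: mexp_def sums_iff mult.commute)
qed (use assms in \<open>auto simp: mexp_def\<close>)

text \<open>The spectral projections of \<open>Jy\<close> onto its eigenvalues \<open>1\<close>, \<open>-1\<close> and \<open>0\<close>; those of
  the diagonal \<open>Jz\<close> are \<open>proj 0\<close>, \<open>proj 2\<close> and \<open>proj 1\<close>.\<close>

definition Jy_plus :: "complex mat" where
  "Jy_plus = mat_of_rows_list 3
     [[1/4, - \<i> / (2 * sqrt 2), -1/4],
      [\<i> / (2 * sqrt 2), 1/2, - \<i> / (2 * sqrt 2)],
      [-1/4, \<i> / (2 * sqrt 2), 1/4]]"

definition Jy_minus :: "complex mat" where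
  "Jy_minus = mat_of_rows_list 3
     [[1/4, \<i> / (2 * sqrt 2), -1/4],
      [- \<i> / (2 * sqrt 2), 1/2, \<i> / (2 * sqrt 2)],
      [-1/4, - \<i> / (2 * sqrt 2), 1/4]]"

definition Jy_zero :: "complex mat" where
  "Jy_zero = mat_of_rows_list 3 [[1/2, 0, 1/2], [0, 0, 0], [1/2, 0, 1/2]]"

lemma dim_Jy [simp]: "dim_row Jy = 3" "dim_col Jy = 3"
  by (simp_all add: Jy_def mat_of_rows_list_def)

lemma dim_Jz [simp]: "dim_row Jz = 3" "dim_col Jz = 3"
  by (simp_all add: Jz_def mat_of_rows_list_def)

lemma sqrt2_times_sqrt2:
  "complex_of_real (sqrt 2) * complex_of_real (sqrt 2) = 2"
  "complex_of_real (sqrt 2) * (complex_of_real (sqrt 2) * w) = 2 * w"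
  by (simp_all add: mult.assoc[symmetric] flip: of_real_mult)

lemma power_smult_Jy:
  "(z \<cdot>\<^sub>m Jy) ^\<^sub>m k = z ^ k \<cdot>\<^sub>m Jy_plus + (- z) ^ k \<cdot>\<^sub>m Jy_minus + 0 ^ k \<cdot>\<^sub>m Jy_zero"
proof (induction k)
  case 0
  show ?case
    by (rule eq_matI)
      (auto simp: Jy_plus_def Jy_minus_def Jy_zero_def mat_of_rows_list_def less_Suc_eq numeral_3_eq_3)
next
  case (Suc k)
  have "(z \<cdot>\<^sub>m Jy) ^\<^sub>m Suc k =
      (z ^ k \<cdot>\<^sub>m Jy_plus + (- z) ^ k \<cdot>\<^sub>m Jy_minus + 0 ^ k \<cdot>\<^sub>m Jy_zero) * (z \<cdot>\<^sub>m Jy)"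
    using Suc by simp
  also have "\<dots> = z ^ Suc k \<cdot>\<^sub>m Jy_plus + (- z) ^ Suc k \<cdot>\<^sub>m Jy_minus + 0 ^ Suc k \<cdot>\<^sub>m Jy_zero"
    apply (rule eq_matI)
    apply (auto simp: Jy_plus_def Jy_minus_def Jy_zero_def Jy_def mat_of_rows_list_def less_Suc_eq
        scalar_prod_def numeral_3_eq_3 lessThan_Suc)
    apply (auto simp: field_simps sqrt2_times_sqrt2)
    done
  finally show ?case .
qed

lemma power_smult_Jz:
  "(z \<cdot>\<^sub>m Jz) ^\<^sub>m k = z ^ k \<cdot>\<^sub>m proj 0 + (- z) ^ k \<cdot>\<^sub>m proj 2 + 0 ^ k \<cdot>\<^sub>m proj 1"
proof (induction k)
  case 0
  show ?case
    by (rule eq_matI) (auto simp: proj_def less_Suc_eq numeral_3_eq_3)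
next
  case (Suc k)
  have "(z \<cdot>\<^sub>m Jz) ^\<^sub>m Suc k =
      (z ^ k \<cdot>\<^sub>m proj 0 + (- z) ^ k \<cdot>\<^sub>m proj 2 + 0 ^ k \<cdot>\<^sub>m proj 1) * (z \<cdot>\<^sub>m Jz)"
    using Suc by simp
  also have "\<dots> = z ^ Suc k \<cdot>\<^sub>m proj 0 + (- z) ^ Suc k \<cdot>\<^sub>m proj 2 + 0 ^ Suc k \<cdot>\<^sub>m proj 1"
    by (rule eq_matI)
      (auto simp: proj_def Jz_def mat_of_rows_list_def less_Suc_eq scalar_prod_def
        numeral_3_eq_3 lessThan_Suc)
  finally show ?case .
qed

lemma mexp_smult_Jy: "mexp (z \<cdot>\<^sub>m Jy) = exp z \<cdot>\<^sub>m Jy_plus + exp (- z) \<cdot>\<^sub>m Jy_minus + Jy_zero"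
  by (rule mexp_spectral[OF _ _ _ _ power_smult_Jy])
    (auto simp: Jy_def Jy_plus_def Jy_minus_def Jy_zero_def mat_of_rows_list_def)

lemma mexp_smult_Jz: "mexp (z \<cdot>\<^sub>m Jz) = exp z \<cdot>\<^sub>m proj 0 + exp (- z) \<cdot>\<^sub>m proj 2 + proj 1"
  by (rule mexp_spectral[OF _ _ _ _ power_smult_Jz]) (auto simp: Jz_def proj_def mat_of_rows_list_def)

lemma projections_carrier:
  "Jy_plus \<in> carrier_mat 3 3" "Jy_minus \<in> carrier_mat 3 3" "Jy_zero \<in> carrier_mat 3 3"
  "proj k \<in> carrier_mat 3 3"
  unfolding carrier_mat_def Jy_plus_def Jy_minus_def Jy_zero_def proj_def mat_of_rows_list_def
  by simp_all

definition rot_y :: "real \<Rightarrow> complex mat" where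
  "rot_y t = mat_of_rows_list 3
     [[(1 + cos t) / 2, - sin t / sqrt 2, (1 - cos t) / 2],
      [sin t / sqrt 2, cos t, - sin t / sqrt 2],
      [(1 - cos t) / 2, sin t / sqrt 2, (1 + cos t) / 2]]"

definition rot_z :: "real \<Rightarrow> complex mat" where
  "rot_z t = mat_of_rows_list 3 [[cis (- t), 0, 0], [0, 1, 0], [0, 0, cis t]]"

lemma exp_i_real_eq_cis: "exp (- \<i> * of_real t) = cis (- t)" "exp (- (- \<i> * of_real t)) = cis t"
  by (simp_all add: cis_conv_exp)

lemma cis_eq_cos_sin: "cis t = of_real (cos t) + \<i> * of_real (sin t)"
  by (simp add: complex_eq_iff)

lemma mexp_Jy_eq_rot_y: "mexp ((- \<i> * of_real t) \<cdot>\<^sub>m Jy) = rot_y t"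
  unfolding mexp_smult_Jy exp_i_real_eq_cis
  apply (rule eq_matI)
  apply (auto simp: rot_y_def Jy_plus_def Jy_minus_def Jy_zero_def mat_of_rows_list_def less_Suc_eq
      numeral_3_eq_3 cis_eq_cos_sin)
  apply (auto simp: field_simps sqrt2_times_sqrt2)
  done

lemma mexp_Jz_eq_rot_z: "mexp ((- \<i> * of_real t) \<cdot>\<^sub>m Jz) = rot_z t"
  unfolding mexp_smult_Jz exp_i_real_eq_cis
  by (rule eq_matI) (auto simp: rot_z_def proj_def mat_of_rows_list_def less_Suc_eq numeral_3_eq_3)

lemma rot_carrier: "rot_y t \<in> carrier_mat 3 3" "rot_z t \<in> carrier_mat 3 3"
  unfolding carrier_mat_def rot_y_def rot_z_def mat_of_rows_list_def by simp_all

lemma index_mult3_mat: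
  assumes "A \<in> carrier_mat 3 3" "B \<in> carrier_mat 3 3" "C \<in> carrier_mat 3 3" "i < 3" "j < 3"
  shows "(A * B * C) $$ (i, j) = (\<Sum>p<3. \<Sum>q<3. A $$ (i, p) * B $$ (p, q) * C $$ (q, j))"
  using assms by (simp add: scalar_prod_def atLeast0LessThan sum_distrib_left mult.assoc)

lemma Zrot_carrier: "Zrot a b g \<in> carrier_mat 3 3"
  unfolding Zrot_def mexp_Jz_eq_rot_z mexp_Jy_eq_rot_y by (meson mult_carrier_mat rot_carrier)

lemma Yrot_carrier: "Yrot a b c \<in> carrier_mat 3 3"
  unfolding Yrot_def mexp_Jz_eq_rot_z mexp_Jy_eq_rot_y by (meson mult_carrier_mat rot_carrier)

lemma Zrot_first_column:
  "Zrot a b g $$ (0,0) = cis (- g) * (cis (- a) * of_real ((1 + cos b) / 2))"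
  "Zrot a b g $$ (1,0) = cis (- g) * of_real (sin b / sqrt 2)"
  "Zrot a b g $$ (2,0) = cis (- g) * (cis a * of_real ((1 - cos b) / 2))"
  unfolding Zrot_def mexp_Jz_eq_rot_z mexp_Jy_eq_rot_y
  by (simp_all add: index_mult3_mat rot_carrier)
    (simp_all add: rot_y_def rot_z_def mat_of_rows_list_def numeral_3_eq_3 lessThan_Suc mult_ac)

lemma Yrot_second_row_alpha_zero:
  "Yrot 0 B c $$ (1,0) = of_real (sin c / sqrt 2)"
  "Yrot 0 B c $$ (1,1) = of_real (cos c)"
  "Yrot 0 B c $$ (1,2) = - of_real (sin c / sqrt 2)"
  unfolding Yrot_def mexp_Jz_eq_rot_z mexp_Jy_eq_rot_y
  by (simp_all add: index_mult3_mat rot_carrier)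
    (simp_all add: rot_y_def rot_z_def mat_of_rows_list_def numeral_3_eq_3 lessThan_Suc)

lemma Yrot_second_row_gamma_zero:
  "Yrot a B 0 $$ (1,0) = cis (- B) * of_real (sin a / sqrt 2)"
  "Yrot a B 0 $$ (1,1) = of_real (cos a)"
  "Yrot a B 0 $$ (1,2) = - cis B * of_real (sin a / sqrt 2)"
  unfolding Yrot_def mexp_Jz_eq_rot_z mexp_Jy_eq_rot_y
  by (simp_all add: index_mult3_mat rot_carrier)
    (simp_all add: rot_y_def rot_z_def mat_of_rows_list_def numeral_3_eq_3 lessThan_Suc)

lemma Pfun_eq_branches:
  assumes "U1 \<in> carrier_mat 3 3" "U2 \<in> carrier_mat 3 3"
  shows "Pfun U1 U2 =
    U2 $$ (1,0) * U1 $$ (0,0) * cnj (U2 $$ (1,0) * U1 $$ (0,0)) +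
    (U2 $$ (1,1) * U1 $$ (1,0) + U2 $$ (1,2) * U1 $$ (2,0)) *
      cnj (U2 $$ (1,1) * U1 $$ (1,0) + U2 $$ (1,2) * U1 $$ (2,0))"
  using assms
  by (simp add: Pfun_def meas_def proj_def adj_def scalar_prod_def numeral_3_eq_3 numeral_2_eq_2
      lessThan_Suc atLeast0LessThan algebra_simps)

lemma Pfun_eq_branch_probabilities:
  assumes "U1 \<in> carrier_mat 3 3" "U2 \<in> carrier_mat 3 3"
  shows "Pfun U1 U2 = of_real ((cmod (U2 $$ (1,0) * U1 $$ (0,0)))\<^sup>2
    + (cmod (U2 $$ (1,1) * U1 $$ (1,0) + U2 $$ (1,2) * U1 $$ (2,0)))\<^sup>2)"
  by (simp only: Pfun_eq_branches[OF assms] of_real_add complex_norm_square)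

lemma norm_real_minus_cis_squared:
  "(cmod (of_real p - of_real q * cis \<phi>))\<^sup>2 = p\<^sup>2 + q\<^sup>2 - 2 * p * q * cos \<phi>"
proof -
  have expand: "(p - q * u)\<^sup>2 + (q * v)\<^sup>2 = p\<^sup>2 + q\<^sup>2 * (v\<^sup>2 + u\<^sup>2) - 2 * p * q * u" for u v
    by (simp add: power2_eq_square algebra_simps)
  show ?thesis
    by (simp add: cmod_power2 expand)
qed

text \<open>\<open>L3\<close> restricted to \<open>\<alpha>\<^sub>2 = 0\<close> (with \<open>c = \<gamma>\<^sub>2\<close>, \<open>\<phi> = \<alpha>\<^sub>1\<close>) or to \<open>\<gamma>\<^sub>2 = 0\<close>
  (with \<open>c = \<alpha>\<^sub>2\<close>, \<open>\<phi> = \<alpha>\<^sub>1 + \<beta>\<^sub>2\<close>), always with \<open>b = \<beta>\<^sub>1\<close>; the phase \<open>\<gamma>\<^sub>1\<close> drops out.\<close>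

definition L3_on_slice :: "real \<Rightarrow> real \<Rightarrow> real \<Rightarrow> real" where
  "L3_on_slice c b \<phi> = (sin c)\<^sup>2 * (1 + (cos b)\<^sup>2) / 4 + (cos c * sin b)\<^sup>2 / 2
     - sin c * cos c * sin b * (1 - cos b) * cos \<phi> / 2"

lemma Pfun_Zrot:
  assumes "U \<in> carrier_mat 3 3"
    and "U $$ (1,0) = cis (- \<psi>) * of_real (sin c / sqrt 2)" "U $$ (1,1) = of_real (cos c)"
    and "U $$ (1,2) = - cis \<psi> * of_real (sin c / sqrt 2)"
  shows "Pfun (Zrot a b g) U = of_real (L3_on_slice c b (a + \<psi>))"
proof -
  define p where "p = cos c * sin b / sqrt 2"
  define q where "q = sin c * (1 - cos b) / (2 * sqrt 2)"
  have branch0: "U $$ (1,0) * Zrot a b g $$ (0,0)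
      = cis (- \<psi>) * cis (- g) * cis (- a) * of_real (sin c / sqrt 2 * ((1 + cos b) / 2))"
    unfolding Zrot_first_column assms(2) by (simp add: mult_ac)
  have branch1: "U $$ (1,1) * Zrot a b g $$ (1,0) + U $$ (1,2) * Zrot a b g $$ (2,0)
      = cis (- g) * (of_real p - of_real q * cis (a + \<psi>))"
    unfolding Zrot_first_column assms(3,4) by (simp add: p_def q_def field_simps flip: cis_mult)
  have "Pfun (Zrot a b g) U = of_real ((cmod (cis (- \<psi>) * cis (- g) * cis (- a)
      * of_real (sin c / sqrt 2 * ((1 + cos b) / 2))))\<^sup>2
      + (cmod (cis (- g) * (of_real p - of_real q * cis (a + \<psi>))))\<^sup>2)"
    by (simp only: Pfun_eq_branch_probabilities[OF Zrot_carrier assms(1)] branch0 branch1)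
  also have "\<dots> = of_real ((sin c / sqrt 2 * ((1 + cos b) / 2))\<^sup>2
      + (cmod (of_real p - of_real q * cis (a + \<psi>)))\<^sup>2)"
    by (simp only: norm_mult norm_cis norm_of_real mult_1_left power2_abs)
  also have "\<dots> = of_real (L3_on_slice c b (a + \<psi>))"
  proof -
    have "(sin c / sqrt 2 * ((1 + cos b) / 2))\<^sup>2 + (p\<^sup>2 + q\<^sup>2 - 2 * p * q * cos (a + \<psi>))
        = L3_on_slice c b (a + \<psi>)"
      unfolding p_def q_def L3_on_slice_def
      by (simp add: power_mult_distrib power_divide field_simps power2_eq_square algebra_simps)
    then show ?thesis
      unfolding norm_real_minus_cis_squared by (rule arg_cong)
  qed
  finally show ?thesis .
qed

lemma L3_alpha2_zero:
  fixes x :: "real ^ 6"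
  assumes "x $ 4 = 0"
  shows "L3 x = of_real (L3_on_slice (x $ 6) (x $ 2) (x $ 1))"
proof -
  have "Pfun (Zrot (x $ 1) (x $ 2) (x $ 3)) (Yrot 0 (x $ 5) (x $ 6))
      = of_real (L3_on_slice (x $ 6) (x $ 2) (x $ 1 + 0))"
    by (rule Pfun_Zrot; simp only: Yrot_carrier Yrot_second_row_alpha_zero; simp)
  then show ?thesis
    using assms by (simp add: L3_def)
qed

lemma L3_gamma2_zero:
  fixes x :: "real ^ 6"
  assumes "x $ 6 = 0"
  shows "L3 x = of_real (L3_on_slice (x $ 4) (x $ 2) (x $ 1 + x $ 5))"
proof -
  have "Pfun (Zrot (x $ 1) (x $ 2) (x $ 3)) (Yrot (x $ 4) (x $ 5) 0)
      = of_real (L3_on_slice (x $ 4) (x $ 2) (x $ 1 + x $ 5))"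
    by (rule Pfun_Zrot; simp only: Yrot_carrier Yrot_second_row_gamma_zero)
  then show ?thesis
    using assms by (simp add: L3_def)
qed

definition mat3_differentiable :: "('a::real_normed_vector \<Rightarrow> complex mat) \<Rightarrow> 'a \<Rightarrow> bool" where
  "mat3_differentiable M x \<longleftrightarrow> (\<forall>y. M y \<in> carrier_mat 3 3)
     \<and> (\<forall>i<3. \<forall>j<3. (\<lambda>y. M y $$ (i, j)) differentiable (at x))"

lemma mat3_differentiable_mult:
  assumes "mat3_differentiable M x" "mat3_differentiable N x"
  shows "mat3_differentiable (\<lambda>y. M y * N y) x"
proof -
  have entry: "(M y * N y) $$ (i, j) = (\<Sum>k<3. M y $$ (i, k) * N y $$ (k, j))"
    if "i < 3" "j < 3" for y i j
  proof -
    have "M y \<in> carrier_mat 3 3" "N y \<in> carrier_mat 3 3"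
      using assms by (simp_all add: mat3_differentiable_def)
    with that show ?thesis
      by (simp add: scalar_prod_def atLeast0LessThan)
  qed
  show ?thesis
    using assms unfolding mat3_differentiable_def
    by (auto simp: entry intro!: differentiable_sum differentiable_mult mult_carrier_mat)
qed

lemma mat3_differentiable_exp_combination:
  assumes "f differentiable (at x)"
    and "A \<in> carrier_mat 3 3" "B \<in> carrier_mat 3 3" "C \<in> carrier_mat 3 3"
  shows "mat3_differentiable (\<lambda>y. exp (f y) \<cdot>\<^sub>m A + exp (- f y) \<cdot>\<^sub>m B + C) x"
proof -
  have exp_f: "(\<lambda>y. exp (g y)) differentiable (at x)"
    if "g differentiable (at x)" for g :: "_ \<Rightarrow> complex"
  proof -
    have "exp differentiable (at (g x))"
      by (rule field_differentiable_imp_differentiable) (rule field_differentiable_within_exp)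
    then show ?thesis
      using that by (rule differentiable_compose)
  qed
  have "(\<lambda>y. exp (f y) * A $$ (i, j) + exp (- f y) * B $$ (i, j) + C $$ (i, j)) differentiable (at x)"
    for i j
    using assms(1)
    by (intro differentiable_add differentiable_mult exp_f differentiable_minus differentiable_const)
  then show ?thesis
    using assms(2-4) unfolding mat3_differentiable_def by auto
qed

lemma mat3_differentiable_rotation:
  fixes x :: "real ^ 'n"
  shows "mat3_differentiable (\<lambda>y. mexp ((- \<i> * of_real (y $ k)) \<cdot>\<^sub>m Jy)) x"
    and "mat3_differentiable (\<lambda>y. mexp ((- \<i> * of_real (y $ k)) \<cdot>\<^sub>m Jz)) x"
proof -
  have angle: "(\<lambda>y::real ^ 'n. - \<i> * of_real (y $ k)) differentiable (at x)"
    by (intro bounded_linear_imp_differentiable bounded_linear_compose[OF bounded_linear_mult_right]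
        bounded_linear_compose[OF bounded_linear_of_real] bounded_linear_vec_nth)
  show "mat3_differentiable (\<lambda>y. mexp ((- \<i> * of_real (y $ k)) \<cdot>\<^sub>m Jy)) x"
    unfolding mexp_smult_Jy
    by (rule mat3_differentiable_exp_combination[OF angle]) (rule projections_carrier)+
  show "mat3_differentiable (\<lambda>y. mexp ((- \<i> * of_real (y $ k)) \<cdot>\<^sub>m Jz)) x"
    unfolding mexp_smult_Jz
    by (rule mat3_differentiable_exp_combination[OF angle]) (rule projections_carrier)+
qed

lemma Pfun_differentiable:
  assumes "mat3_differentiable U1 x" "mat3_differentiable U2 x"
  shows "(\<lambda>y. Pfun (U1 y) (U2 y)) differentiable (at x)"
proof -
  have "U1 y \<in> carrier_mat 3 3" "U2 y \<in> carrier_mat 3 3" for y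
    using assms by (simp_all add: mat3_differentiable_def)
  then have branches: "(\<lambda>y. Pfun (U1 y) (U2 y)) = (\<lambda>y.
      U2 y $$ (1,0) * U1 y $$ (0,0) * cnj (U2 y $$ (1,0) * U1 y $$ (0,0)) +
      (U2 y $$ (1,1) * U1 y $$ (1,0) + U2 y $$ (1,2) * U1 y $$ (2,0)) *
        cnj (U2 y $$ (1,1) * U1 y $$ (1,0) + U2 y $$ (1,2) * U1 y $$ (2,0)))"
    by (simp add: Pfun_eq_branches)
  have entries: "(\<lambda>y. U1 y $$ (i, j)) differentiable (at x)"
    "(\<lambda>y. U2 y $$ (i, j)) differentiable (at x)" if "i < 3" "j < 3" for i j
    using assms that unfolding mat3_differentiable_def by blast+
  show ?thesis
    unfolding branches
    by (intro differentiable_add differentiable_mult differentiable_cnj_iff[THEN iffD2] entries) simp_all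
qed

lemma L3_differentiable: "L3 differentiable (at x)"
proof -
  have "mat3_differentiable (\<lambda>y. Zrot (y $ 1) (y $ 2) (y $ 3)) x"
    unfolding Zrot_def by (intro mat3_differentiable_mult mat3_differentiable_rotation)
  moreover have "mat3_differentiable (\<lambda>y. Yrot (y $ 4) (y $ 5) (y $ 6)) x"
    unfolding Yrot_def by (intro mat3_differentiable_mult mat3_differentiable_rotation)
  ultimately show ?thesis
    unfolding L3_def[abs_def] by (rule Pfun_differentiable)
qed

lemma has_derivative_along_line:
  fixes f :: "'a::real_normed_vector \<Rightarrow> complex"
  assumes D: "(f has_derivative D) (at x)"
    and line: "\<And>t. f (x + t *\<^sub>R h) = of_real (g t)"
    and g: "(g has_real_derivative g') (at 0)"
  shows "D h = of_real g'"
proof -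
  have "((\<lambda>t. x + t *\<^sub>R h) has_derivative (\<lambda>t. t *\<^sub>R h)) (at 0)"
    by (auto intro!: derivative_eq_intros)
  from has_derivative_compose[OF this] D
  have "((\<lambda>t. f (x + t *\<^sub>R h)) has_derivative (\<lambda>t. D (t *\<^sub>R h))) (at 0)"
    by simp
  then have "((\<lambda>t. f (x + t *\<^sub>R h)) has_vector_derivative D h) (at 0)"
    using linear_scale[OF has_derivative_linear[OF D]] by (simp add: has_vector_derivative_def)
  moreover have "((\<lambda>t. f (x + t *\<^sub>R h)) has_vector_derivative of_real g') (at 0)"
    unfolding line by (rule has_vector_derivative_of_real[OF g])
  ultimately show ?thesis
    by (rule vector_derivative_unique_at)
qed

lemma L3_on_slice_deriv_first:
  "((\<lambda>t. L3_on_slice t b \<phi>) has_real_derivative - sin b * (1 - cos b) * cos \<phi> / 2) (at 0)"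
  unfolding L3_on_slice_def by (auto intro!: derivative_eq_intros)

lemma L3_on_slice_deriv_second:
  "((\<lambda>t. L3_on_slice 0 (b + t) \<phi>) has_real_derivative sin b * cos b) (at 0)"
  unfolding L3_on_slice_def by (auto intro!: derivative_eq_intros)

lemma slice_derivatives_not_all_zero:
  fixes a b \<beta> :: real
  assumes "0 < b" "b < pi" "0 < \<beta>" "\<beta> < pi"
    and "sin b * cos b = 0" "sin b * (1 - cos b) * cos a = 0"
  shows "sin b * (1 - cos b) * cos (a + \<beta>) \<noteq> 0"
proof
  assume third: "sin b * (1 - cos b) * cos (a + \<beta>) = 0"
  have "sin b > 0" "sin \<beta> > 0"
    using assms(1-4) by (simp_all add: sin_gt_zero)
  then have "cos b = 0"
    using assms(5) by simp
  with \<open>sin b > 0\<close> have "cos a = 0" "cos (a + \<beta>) = 0"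
    using assms(6) third by simp_all
  then have "sin a = 0"
    using \<open>sin \<beta> > 0\<close> by (simp add: cos_add)
  with \<open>cos a = 0\<close> show False
    using sin_cos_squared_add[of a] by simp
qed

theorem lemma3:
  fixes x :: "real^6"
  assumes "- pi < x$1" "x$1 \<le> pi" "0 < x$2" "x$2 < pi" "- pi < x$3" "x$3 \<le> pi"
      and "- pi < x$4" "x$4 \<le> pi" "0 < x$5" "x$5 < pi" "- pi < x$6" "x$6 \<le> pi"
      and "x$4 = 0" "x$6 = 0"
  shows "\<exists>D. (L3 has_derivative D) (at x) \<and> D \<noteq> (\<lambda>h. 0)"
proof -
  obtain D where D: "(L3 has_derivative D) (at x)"
    using L3_differentiable unfolding differentiable_def by blast
  have "D (axis 2 1) = of_real (sin (x$2) * cos (x$2))"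
    by (rule has_derivative_along_line[OF D _ L3_on_slice_deriv_second])
      (simp add: L3_alpha2_zero assms(13,14) axis_def)
  moreover have "D (axis 6 1) = of_real (- sin (x$2) * (1 - cos (x$2)) * cos (x$1) / 2)"
    by (rule has_derivative_along_line[OF D _ L3_on_slice_deriv_first])
      (simp add: L3_alpha2_zero assms(13,14) axis_def)
  moreover have "D (axis 4 1) = of_real (- sin (x$2) * (1 - cos (x$2)) * cos (x$1 + x$5) / 2)"
    by (rule has_derivative_along_line[OF D _ L3_on_slice_deriv_first])
      (simp add: L3_gamma2_zero assms(13,14) axis_def)
  ultimately have "D \<noteq> (\<lambda>h. 0)"
    using slice_derivatives_not_all_zero[of "x$2" "x$5" "x$1"] assms(3,4,9,10) by auto
  with D show ?thesis
    by blast
qed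

end
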